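(* Let $P_1:\mathbb R^n\to\mathbb R$ be convex and continuous, $A_1\in\mathbb R^{q_1\times n}$, $l_1:\mathbb R^{q_1}\to\mathbb R$ strictly convex with $\{x:l_1(A_1x)\le0\}\neq\emptyset$, and $F(x):=P_1(x)+\delta_{\{l_1(A_1\cdot)\le0\}}(x)$. Suppose (i) $\inf P_1<\inf F$, and (ii) there is a Lagrange multiplier $\bar\lambda\ge0$ for $\min_xF(x)$ such that $x\mapsto P_1(x)+\bar\lambda\,l_1(A_1x)$ is a KL function with exponent $\alpha\in(0,1)$. Then $F$ is a KL function with exponent $\alpha$.
   Context: $\delta_C$ denotes the indicator function of $C$ ($0$ on $C$, $+\infty$ outside); $\partial$ is the convex subdifferential. A Lagrange multiplier for $\min_xF(x)$ is a number $\bar\lambda\ge0$ with $\inf_{x}\{P_1(x)+\bar\lambda l_1(A_1x)\}=\inf_xF(x)>-\infty$. KL function with exponent $\alpha\in[0,1)$: a proper closed $h$ such that at every $\hat x\in{\rm dom}\,\partial h$ there exist $a\in(0,\infty]$, a neighborhood $V$ of $\hat x$ and $a_0>0$ with $a_0(1-\alpha)(h(x)-h(\hat x))^{-\alpha}\,{\rm dist}(0,\partial h(x))\ge1$ for all $x\in V$ with $h(\hat x)<h(x)<h(\hat x)+a$. *)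

theory Defs
  imports "HOL-Analysis.Analysis"
begin

definition strictly_convex :: "('a::real_vector \<Rightarrow> real) \<Rightarrow> bool" where
  "strictly_convex f \<longleftrightarrow> (\<forall>x y u. x \<noteq> y \<and> 0 < u \<and> u < 1 \<longrightarrow>
      f ((1 - u) *\<^sub>R x + u *\<^sub>R y) < (1 - u) * f x + u * f y)"

definition proper_fun :: "('a \<Rightarrow> ereal) \<Rightarrow> bool" where
  "proper_fun h \<longleftrightarrow> (\<forall>x. h x \<noteq> -\<infinity>) \<and> (\<exists>x. h x \<noteq> \<infinity>)"

definition closed_fun :: "('a::topological_space \<Rightarrow> ereal) \<Rightarrow> bool" where
  "closed_fun h \<longleftrightarrow> closed {p :: 'a \<times> real. h (fst p) \<le> ereal (snd p)}"

definition indicator_fun :: "'a set \<Rightarrow> 'a \<Rightarrow> ereal" where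
  "indicator_fun C x = (if x \<in> C then 0 else \<infinity>)"

definition subdiff :: "('a::real_inner \<Rightarrow> ereal) \<Rightarrow> 'a \<Rightarrow> 'a set" where
  "subdiff h x = {v. \<bar>h x\<bar> \<noteq> \<infinity> \<and> (\<forall>y. h y \<ge> h x + ereal (v \<bullet> (y - x)))}"

definition dom_subdiff :: "('a::real_inner \<Rightarrow> ereal) \<Rightarrow> 'a set" where
  "dom_subdiff h = {x. subdiff h x \<noteq> {}}"

text \<open>dist(0, empty set) = +infinity, so the KL inequality holds vacuously when the
  subdifferential is empty; this is encoded by the premise subdiff h x \<noteq> {}.\<close>
definition KL_exponent :: "('a::real_inner \<Rightarrow> ereal) \<Rightarrow> real \<Rightarrow> bool" where
  "KL_exponent h \<alpha> \<longleftrightarrow> proper_fun h \<and> closed_fun h \<and>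
     (\<forall>xh \<in> dom_subdiff h. \<exists>a::ereal. a > 0 \<and> (\<exists>V a0. open V \<and> xh \<in> V \<and> a0 > (0::real) \<and>
        (\<forall>x\<in>V. h xh < h x \<and> h x < h xh + a \<and> subdiff h x \<noteq> {} \<longrightarrow>
           a0 * (1 - \<alpha>) * (real_of_ereal (h x - h xh)) powr (- \<alpha>)
             * infdist 0 (subdiff h x) \<ge> 1)))"

end

theory Submission
  imports Defs
begin

text \<open>
  Fix \<open>xh \<in> dom \<partial>F\<close>, so \<open>xh\<close> is feasible. If some feasible point has a smaller value of \<open>P1\<close>,
  the subgradient inequality towards that point keeps all subgradients of \<open>F\<close> near \<open>xh\<close> away
  from \<open>0\<close>, and the KL inequality is immediate. Otherwise \<open>xh\<close> minimises \<open>F\<close>, and the multiplier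
  makes it a minimiser of the Lagrangian \<open>G = P1 + \<lambda> l1(A1 \<cdot>)\<close>, with \<open>\<lambda> > 0\<close> by (i). The KL
  property of the convex function \<open>G\<close> yields the error bound
  \<open>dist(x, argmin G) \<le> K (G x - min G)\<^bsup>1-\<alpha>\<^esup>\<close>. Strict convexity of \<open>l1\<close> makes \<open>A1\<close> constant on
  \<open>argmin G\<close>, so \<open>argmin G\<close> consists of feasible minimisers of \<open>F\<close>; as \<open>G \<le> F\<close> on the feasible set,
  the error bound passes to \<open>F\<close>, where the subgradient inequality turns it into the KL inequality.
\<close>

lemma powr_le_tangent:
  fixes s t b :: real
  assumes "0 \<le> s" "0 < t" "0 < b" "b < 1"
  shows "s powr b \<le> t powr b + b * t powr (b - 1) * (s - t)"
proof (cases "s = 0")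
  case True
  have "t powr (b - 1) * t = t powr b"
    using assms by (simp add: powr_diff)
  then show ?thesis using True assms
    by (simp add: algebra_simps)
next
  case False
  then have "s > 0" using assms by simp
  then have Young: "s powr b * t powr (1 - b) \<le> b * s + (1 - b) * t"
    using Youngs_inequality_0[of b "1-b" s t] assms by simp
  have "s powr b = s powr b * t powr (1 - b) * t powr (b - 1)"
    using assms by (simp add: powr_add[symmetric])
  also have "\<dots> \<le> (b * s + (1 - b) * t) * t powr (b - 1)"
    using Young by (intro mult_right_mono) auto
  also have "\<dots> = t powr b + b * t powr (b - 1) * (s - t)"
  proof -
    have "t * t powr (b - 1) = t powr b" using assms
      by (simp add: powr_diff)
    then show ?thesis by (simp add: algebra_simps)
  qed
  finally show ?thesis .
qed

lemma powr_half_le: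
  fixes x \<alpha> :: real
  assumes "0 \<le> x" "0 \<le> \<alpha>" "\<alpha> \<le> 1"
  shows "x powr \<alpha> / 2 \<le> (x / 2) powr \<alpha>"
proof -
  have "2 powr \<alpha> \<le> 2" using powr_mono[of \<alpha> 1 2] assms by simp
  then have "x powr \<alpha> / 2 \<le> x powr \<alpha> / 2 powr \<alpha>"
    by (intro divide_left_mono) auto
  also have "\<dots> = (x / 2) powr \<alpha>" using assms(1) by (simp add: powr_divide)
  finally show ?thesis .
qed

lemma powr_slope_bound:
  fixes s t b C d :: real
  assumes "0 \<le> s" "0 < t" "0 < b" "b < 1" "0 < C"
    and slope: "- d \<le> C * (s powr b - t powr b)"
  shows "t - t powr (1 - b) / (C * b) * d \<le> s"
proof -
  have "C * (s powr b - t powr b) \<le> C * (b * t powr (b - 1) * (s - t))"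
    using powr_le_tangent[OF assms(1-4)] assms(5) by (intro mult_left_mono) auto
  then have "- d \<le> C * b * t powr (b - 1) * (s - t)"
    using slope by (simp add: mult.assoc)
  then have "- d * t powr (1 - b) \<le> C * b * t powr (b - 1) * (s - t) * t powr (1 - b)"
    by (rule mult_right_mono) simp
  also have "\<dots> = C * b * (s - t) * (t powr (b - 1) * t powr (1 - b))"
    by (simp add: ac_simps)
  also have "t powr (b - 1) * t powr (1 - b) = 1"
    using assms(2) by (simp flip: powr_add)
  finally show ?thesis
    using assms by (simp add: field_simps)
qed

lemma le_of_le_plus_small:
  fixes a b k :: real
  assumes "0 \<le> k" and small: "\<And>s. 0 < s \<Longrightarrow> s \<le> 1 \<Longrightarrow> a \<le> b + s * k"
  shows "a \<le> b"
proof (rule field_le_epsilon)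
  fix e :: real assume "0 < e"
  define s where "s = min 1 (e / (k + 1))"
  have s: "0 < s" "s \<le> 1" "s \<le> e / (k + 1)"
    using \<open>0 < e\<close> \<open>0 \<le> k\<close> by (auto simp: s_def)
  then have "s * k \<le> e / (k + 1) * (k + 1)"
    using \<open>0 \<le> k\<close> by (intro mult_mono) auto
  then have "s * k \<le> e" using \<open>0 \<le> k\<close> by simp
  with small[OF s(1,2)] show "a \<le> b + e" by linarith
qed

lemma proximal_point_exists:
  fixes g :: "'a::euclidean_space \<Rightarrow> real"
  assumes cont: "continuous_on UNIV g" and nonneg: "\<And>x. 0 \<le> g x" and "0 < t"
  shows "\<exists>p. \<forall>y. g p + (norm (p - z))\<^sup>2 / (2*t) \<le> g y + (norm (y - z))\<^sup>2 / (2*t)"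
proof -
  define R where "R = 2*t*g z + 1"
  have R1: "R \<ge> 1" using nonneg \<open>0 < t\<close> by (simp add: R_def)
  have "continuous_on (cball z R) (\<lambda>y. g y + (norm (y - z))\<^sup>2 / (2*t))"
    using \<open>0 < t\<close> by (intro continuous_intros continuous_on_subset[OF cont]) auto
  then obtain p where p: "\<And>y. y \<in> cball z R \<Longrightarrow>
      g p + (norm (p - z))\<^sup>2 / (2*t) \<le> g y + (norm (y - z))\<^sup>2 / (2*t)"
    using continuous_attains_inf[of "cball z R"] R1 by fastforce
  have "g p + (norm (p - z))\<^sup>2 / (2*t) \<le> g z"
    using p[of z] R1 by simp
  moreover have "g z \<le> (norm (y - z))\<^sup>2 / (2*t)" if "y \<notin> cball z R" for y
  proof -
    have "R \<le> norm (y - z)" using that by (simp add: dist_norm norm_minus_commute)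
    then have "R * 1 \<le> norm (y - z) * norm (y - z)" using R1 by (intro mult_mono) auto
    then have "2*t*g z \<le> (norm (y - z))\<^sup>2" by (simp add: R_def power2_eq_square)
    then show ?thesis using \<open>0 < t\<close> by (simp add: field_simps)
  qed
  ultimately show ?thesis
    using p nonneg by (metis add_increasing order.trans)
qed

lemma proximal_point_subgradient:
  fixes g :: "'a::real_inner \<Rightarrow> real"
  assumes conv: "convex_on UNIV g" and "0 < t"
    and prox: "\<And>y. g p + (norm (p - z))\<^sup>2 / (2*t) \<le> g y + (norm (y - z))\<^sup>2 / (2*t)"
  shows "g p + ((1/t) *\<^sub>R (z - p)) \<bullet> (y - p) \<le> g y"
proof -
  define d where "d = y - p"
  have "((1/t) *\<^sub>R (z - p)) \<bullet> d \<le> g y - g p"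
  proof (rule le_of_le_plus_small)
    fix s :: real assume s: "0 < s" "s \<le> 1"
    define q where "q = p + s *\<^sub>R d"
    have "g q - g p \<le> s * (g y - g p)"
      using convex_onD[OF conv, of s p y] s by (simp add: q_def d_def algebra_simps)
    moreover have "(norm (q - z))\<^sup>2 - (norm (p - z))\<^sup>2 = s * (2 * ((p - z) \<bullet> d) + s * (norm d)\<^sup>2)"
      unfolding q_def power2_norm_eq_inner
      by (simp add: algebra_simps inner_add_left inner_add_right inner_commute power2_eq_square)
    moreover have "2 * t * (g p - g q) \<le> (norm (q - z))\<^sup>2 - (norm (p - z))\<^sup>2"
    proof -
      have "2*t * (g p + (norm (p - z))\<^sup>2 / (2*t)) \<le> 2*t * (g q + (norm (q - z))\<^sup>2 / (2*t))"
        using prox[of q] \<open>0 < t\<close> by (intro mult_left_mono) auto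
      then show ?thesis using \<open>0 < t\<close> by (simp add: distrib_left right_diff_distrib)
    qed
    moreover have "2 * t * (g q - g p) \<le> 2 * t * (s * (g y - g p))"
      using calculation(1) \<open>0 < t\<close> by (intro mult_left_mono) auto
    ultimately have "s * (- 2 * ((p - z) \<bullet> d) - s * (norm d)\<^sup>2) \<le> s * (2 * t * (g y - g p))"
      by (simp add: algebra_simps)
    then have "- 2 * ((p - z) \<bullet> d) - s * (norm d)\<^sup>2 \<le> 2 * t * (g y - g p)"
      using s by simp
    then have "(z - p) \<bullet> d \<le> t * (g y - g p + s * ((norm d)\<^sup>2 / (2*t)))"
      using \<open>0 < t\<close> by (simp add: algebra_simps inner_diff_left)
    then show "((1/t) *\<^sub>R (z - p)) \<bullet> d \<le> g y - g p + s * ((norm d)\<^sup>2 / (2*t))"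
      using \<open>0 < t\<close> by (simp add: pos_divide_le_eq mult.commute)
  qed (use \<open>0 < t\<close> in simp)
  then show ?thesis by (simp add: d_def)
qed

lemma proximal_step_le_slope:
  fixes p z :: "'a::real_normed_vector"
  assumes "0 < t" "0 \<le> L"
    and descent: "g p + (norm (p - z))\<^sup>2 / (2*t) \<le> g z" and slope: "g z - L * norm (p - z) \<le> g p"
  shows "norm (p - z) \<le> 2 * t * L"
proof -
  have "(norm (p - z))\<^sup>2 \<le> 2 * t * (g z - g p)"
    using descent \<open>0 < t\<close> by (simp add: field_simps)
  also have "\<dots> \<le> 2 * t * (L * norm (p - z))"
    using slope \<open>0 < t\<close> by (intro mult_left_mono) auto
  finally have "norm (p - z) * norm (p - z) \<le> (2 * t * L) * norm (p - z)"
    by (simp add: power2_eq_square algebra_simps)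
  then show ?thesis using \<open>0 < t\<close> \<open>0 \<le> L\<close> by (cases "p = z") auto
qed

lemma convex_small_subgradient_near:
  fixes g :: "'a::euclidean_space \<Rightarrow> real"
  assumes cont: "continuous_on UNIV g" and conv: "convex_on UNIV g" and nonneg: "\<And>x. 0 \<le> g x"
    and "0 < g z" "0 \<le> L" "0 < \<rho>" "0 < m"
    and slope: "\<And>y. dist y z < \<rho> \<Longrightarrow> g z - L * dist y z \<le> g y"
  shows "\<exists>p w. dist p z < m \<and> g z / 2 \<le> g p \<and> g p \<le> g z
           \<and> (\<forall>u. g p + w \<bullet> (u - p) \<le> g u) \<and> norm w \<le> 2 * L"
proof -
  define r where "r = min \<rho> m"
  \<comment> \<open>\<open>t\<close> is small enough to keep the proximal point within \<open>r\<close> of \<open>z\<close> and to make the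
    loss \<open>L * dist p z \<le> 2 * L\<^sup>2 * t\<close> at most \<open>g z / 2\<close>\<close>
  define t where "t = min (r\<^sup>2 / (4 * g z)) (g z / (4 * L\<^sup>2 + 1))"
  have "0 < r" using assms by (simp add: r_def)
  have "0 < t" using \<open>0 < r\<close> \<open>0 < g z\<close> by (auto simp: t_def intro!: divide_pos_pos add_nonneg_pos)
  obtain p where prox: "\<And>y. g p + (norm (p - z))\<^sup>2 / (2*t) \<le> g y + (norm (y - z))\<^sup>2 / (2*t)"
    using proximal_point_exists[OF cont nonneg \<open>0 < t\<close>] by blast
  define n where "n = norm (p - z)"
  have "0 \<le> n" by (simp add: n_def)
  have descent: "g p + n\<^sup>2 / (2*t) \<le> g z" using prox[of z] by (simp add: n_def)
  have "n\<^sup>2 + 2 * t * g p \<le> 2 * t * g z"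
    using descent \<open>0 < t\<close> by (simp add: field_simps)
  moreover have "0 \<le> 2 * t * g p" using nonneg[of p] \<open>0 < t\<close> by simp
  ultimately have "n\<^sup>2 \<le> 2 * t * g z" by linarith
  also have "\<dots> \<le> 2 * (r\<^sup>2 / (4 * g z)) * g z"
    using \<open>0 < g z\<close> by (intro mult_right_mono) (auto simp: t_def)
  also have "\<dots> < r\<^sup>2" using \<open>0 < g z\<close> \<open>0 < r\<close> by simp
  finally have "n < r"
    using \<open>0 < r\<close> by (intro power_less_imp_less_base[of n 2]) auto
  then have "dist p z < \<rho>" "dist p z < m" by (auto simp: n_def r_def dist_norm)
  have gp_lower: "g z - L * n \<le> g p" using slope[OF \<open>dist p z < \<rho>\<close>] by (simp add: n_def dist_norm)
  have "n \<le> 2 * t * L"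
    using proximal_step_le_slope[OF \<open>0 < t\<close> \<open>0 \<le> L\<close> descent[unfolded n_def] gp_lower[unfolded n_def]]
    by (simp add: n_def)
  have "L * n \<le> 2 * L\<^sup>2 * t"
    using mult_left_mono[OF \<open>n \<le> 2 * t * L\<close> \<open>0 \<le> L\<close>] by (simp add: power2_eq_square algebra_simps)
  also have "\<dots> \<le> 2 * L\<^sup>2 * (g z / (4 * L\<^sup>2 + 1))" by (intro mult_left_mono) (auto simp: t_def)
  also have "\<dots> \<le> g z / 2"
  proof -
    have "2 * L\<^sup>2 * g z \<le> g z / 2 * (4 * L\<^sup>2 + 1)"
      using \<open>0 < g z\<close> by (simp add: algebra_simps)
    then show ?thesis by (simp add: pos_divide_le_eq add_nonneg_pos)
  qed
  finally have "g z / 2 \<le> g p" using gp_lower by linarith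
  moreover have "g p \<le> g z"
  proof -
    have "0 \<le> n\<^sup>2 / (2 * t)" using \<open>0 < t\<close> by simp
    then show ?thesis using descent by linarith
  qed
  moreover have "\<forall>u. g p + ((1/t) *\<^sub>R (z - p)) \<bullet> (u - p) \<le> g u"
    using proximal_point_subgradient[OF conv \<open>0 < t\<close> prox] by blast
  moreover have "norm ((1/t) *\<^sub>R (z - p)) \<le> 2 * L"
  proof -
    have "norm ((1/t) *\<^sub>R (z - p)) = n / t"
      using \<open>0 < t\<close> by (simp add: n_def norm_minus_commute)
    also have "\<dots> \<le> 2 * L"
      using \<open>n \<le> 2 * t * L\<close> \<open>0 < t\<close> by (simp add: pos_divide_le_eq mult.commute mult.left_commute)
    finally show ?thesis .
  qed
  ultimately show ?thesis using \<open>dist p z < m\<close> by blast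
qed

lemma Ekeland_cball:
  fixes h :: "'a::heine_borel \<Rightarrow> real"
  assumes "continuous_on (cball x0 r) h" "0 \<le> r"
  shows "\<exists>z. dist x0 z \<le> r \<and> h z + dist z x0 \<le> h x0
           \<and> (\<forall>y. dist x0 y \<le> r \<longrightarrow> h z \<le> h y + dist y z)"
proof -
  have "continuous_on (cball x0 r) (\<lambda>y. h y + dist y x0)"
    using assms(1) by (intro continuous_intros)
  then obtain z where z: "z \<in> cball x0 r" "\<And>y. y \<in> cball x0 r \<Longrightarrow> h z + dist z x0 \<le> h y + dist y x0"
    using continuous_attains_inf[of "cball x0 r"] assms(2) by fastforce
  have "h z \<le> h y + dist y z" if "dist x0 y \<le> r" for y
    using z(2)[of y] that dist_triangle[of y x0 z] by (simp add: dist_commute)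
  then show ?thesis using z(1) z(2)[of x0] assms(2) by auto
qed

lemma powr_Ekeland_slope_point:
  fixes g :: "'a::euclidean_space \<Rightarrow> real"
  assumes cont: "continuous_on UNIV g" and nonneg: "\<And>x. 0 \<le> g x"
    and "0 < C" "0 < \<alpha>" "\<alpha> < 1" "C * g x0 powr (1 - \<alpha>) < r"
    and zero_free: "\<And>s. dist s x0 \<le> C * g x0 powr (1 - \<alpha>) \<Longrightarrow> 0 < g s"
  shows "\<exists>z \<rho>. dist z x0 \<le> C * g x0 powr (1 - \<alpha>) \<and> 0 < g z \<and> g z \<le> g x0 \<and> 0 < \<rho>
           \<and> (\<forall>y. dist y z < \<rho> \<longrightarrow> g z - g z powr \<alpha> / (C * (1 - \<alpha>)) * dist y z \<le> g y)"
proof -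
  define H where "H y = g y powr (1 - \<alpha>)" for y
  have "0 \<le> C * g x0 powr (1 - \<alpha>)" using \<open>0 < C\<close> by simp
  then have "0 \<le> r" using assms(6) by linarith
  have "continuous_on (cball x0 r) (\<lambda>y. C * H y)"
    unfolding H_def using assms
    by (intro continuous_on_powr' continuous_on_subset[OF cont] continuous_intros) auto
  then obtain z where z_descent: "C * H z + dist z x0 \<le> C * H x0"
    and z_min: "\<And>y. dist x0 y \<le> r \<Longrightarrow> C * H z \<le> C * H y + dist y z"
    using Ekeland_cball[of x0 r "\<lambda>y. C * H y"] \<open>0 \<le> r\<close> by auto
  have "0 \<le> C * H z" using \<open>0 < C\<close> by (simp add: H_def)
  then have "dist z x0 \<le> C * H x0" using z_descent by linarith
  then have "0 < g z" using zero_free by (simp add: H_def)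
  have "C * H z \<le> C * H x0" using z_descent zero_le_dist[of z x0] by linarith
  then have "H z \<le> H x0" using \<open>0 < C\<close> by simp
  then have "g z \<le> g x0"
    unfolding H_def using assms powr_less_mono2[of "1 - \<alpha>" "g x0" "g z"] nonneg[of x0] by force
  define \<rho> where "\<rho> = r - dist z x0"
  have "0 < \<rho>" using \<open>dist z x0 \<le> C * H x0\<close> assms(6) by (simp add: \<rho>_def H_def)
  have "g z - g z powr \<alpha> / (C * (1 - \<alpha>)) * dist y z \<le> g y" if "dist y z < \<rho>" for y
  proof -
    have "dist x0 y \<le> r"
      using dist_triangle[of x0 y z] that by (simp add: \<rho>_def dist_commute)
    then have "- dist y z \<le> C * (g y powr (1 - \<alpha>) - g z powr (1 - \<alpha>))"
      using z_min[of y] by (simp add: H_def algebra_simps)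
    from powr_slope_bound[OF nonneg \<open>0 < g z\<close> _ _ \<open>0 < C\<close> this] assms
    show ?thesis by (simp add: mult.commute)
  qed
  then show ?thesis
    using \<open>dist z x0 \<le> C * H x0\<close> \<open>0 < g z\<close> \<open>g z \<le> g x0\<close> \<open>0 < \<rho>\<close> unfolding H_def by blast
qed

lemma convex_KL_error_bound:
  fixes g :: "'a::euclidean_space \<Rightarrow> real"
  assumes cont: "continuous_on UNIV g" and conv: "convex_on UNIV g" and nonneg: "\<And>x. 0 \<le> g x"
    and "g xb = 0" "0 < c" "0 < \<alpha>" "\<alpha> < 1"
    and KL: "\<And>y w. dist y xb < \<delta> \<Longrightarrow> 0 < g y \<Longrightarrow> g y < a \<Longrightarrow> (\<forall>u. g y + w \<bullet> (u - y) \<le> g u)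
               \<Longrightarrow> c * g y powr \<alpha> \<le> norm w"
    and x0: "dist x0 xb < \<delta> / 3" "g x0 < a"
  shows "\<exists>s. g s = 0 \<and> dist x0 s \<le> 5 / (c * (1 - \<alpha>)) * g x0 powr (1 - \<alpha>)"
proof (rule ccontr)
  \<comment> \<open>Ekeland's principle for \<open>C g\<^bsup>1-\<alpha>\<^esup>\<close> gives a point \<open>z\<close> where \<open>g\<close> decreases at rate at most
    \<open>L = g(z)\<^sup>\<alpha> / (C (1-\<alpha>))\<close>; a proximal step from \<open>z\<close> then produces a subgradient of norm \<open>\<le> 2L\<close>,
    which the KL inequality forbids once \<open>C (1-\<alpha>) c > 4\<close>.\<close>
  assume no_zero: "\<not> ?thesis"
  define C where "C = 5 / (c * (1 - \<alpha>))"
  have "0 < C" using assms by (simp add: C_def)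
  have far: "C * g x0 powr (1 - \<alpha>) < dist x0 s" if "g s = 0" for s
    using no_zero that unfolding C_def by force
  have "0 < g s" if "dist s x0 \<le> C * g x0 powr (1 - \<alpha>)" for s
    using far[of s] nonneg[of s] that by (force simp: dist_commute)
  then obtain z \<rho> where "dist z x0 \<le> C * g x0 powr (1 - \<alpha>)" "0 < g z" "g z \<le> g x0" "0 < \<rho>"
    and slope': "\<forall>y. dist y z < \<rho> \<longrightarrow> g z - g z powr \<alpha> / (C * (1 - \<alpha>)) * dist y z \<le> g y"
    using powr_Ekeland_slope_point[OF cont nonneg \<open>0 < C\<close> assms(6,7) far[OF \<open>g xb = 0\<close>]] by blast
  define L where "L = g z powr \<alpha> / (C * (1 - \<alpha>))"
  have slope: "g z - L * dist y z \<le> g y" if "dist y z < \<rho>" for y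
    using slope' that by (simp add: L_def)
  have "0 \<le> L" using \<open>0 < C\<close> assms by (simp add: L_def)
  have "0 < \<delta>" using x0(1) zero_le_dist[of x0 xb] by linarith
  obtain p w where "dist p z < \<delta> / 3" "g z / 2 \<le> g p" "g p \<le> g z"
    and subgrad: "\<forall>u. g p + w \<bullet> (u - p) \<le> g u" and "norm w \<le> 2 * L"
    using convex_small_subgradient_near[OF cont conv nonneg \<open>0 < g z\<close> \<open>0 \<le> L\<close> \<open>0 < \<rho>\<close> _ slope]
      \<open>0 < \<delta>\<close> by (metis divide_pos_pos zero_less_numeral)
  have "dist p xb < \<delta>"
    using dist_triangle[of p xb z] dist_triangle[of z xb x0] x0(1) \<open>dist p z < \<delta> / 3\<close>
      \<open>dist z x0 \<le> C * g x0 powr (1 - \<alpha>)\<close> far[OF \<open>g xb = 0\<close>] by (simp add: dist_commute)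
  then have "c * g p powr \<alpha> \<le> 2 * L"
    using KL[OF _ _ _ subgrad] \<open>g z / 2 \<le> g p\<close> \<open>g p \<le> g z\<close> \<open>g z \<le> g x0\<close> \<open>0 < g z\<close> x0(2)
      \<open>norm w \<le> 2 * L\<close> by force
  moreover have "g z powr \<alpha> / 2 \<le> g p powr \<alpha>"
    using powr_half_le[of "g z" \<alpha>] powr_mono2[of \<alpha> "g z / 2" "g p"] \<open>g z / 2 \<le> g p\<close> \<open>0 < g z\<close> assms(6,7)
    by simp
  then have "c * (g z powr \<alpha> / 2) \<le> c * g p powr \<alpha>"
    using \<open>0 < c\<close> by (intro mult_left_mono) auto
  ultimately have "c * (g z powr \<alpha> / 2) \<le> 2 * L" by linarith
  moreover have "2 * L = c * g z powr \<alpha> * (2 / 5)"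
    using assms by (simp add: L_def C_def field_simps)
  moreover have "0 < c * g z powr \<alpha>" using \<open>0 < c\<close> \<open>0 < g z\<close> by simp
  ultimately show False by simp
qed

definition KL_at :: "('a::real_inner \<Rightarrow> ereal) \<Rightarrow> real \<Rightarrow> 'a \<Rightarrow> bool" where
  "KL_at h \<alpha> xh \<longleftrightarrow> (\<exists>a::ereal. a > 0 \<and> (\<exists>V a0. open V \<and> xh \<in> V \<and> a0 > (0::real) \<and>
     (\<forall>x\<in>V. h xh < h x \<and> h x < h xh + a \<and> subdiff h x \<noteq> {} \<longrightarrow>
        a0 * (1 - \<alpha>) * (real_of_ereal (h x - h xh)) powr (- \<alpha>) * infdist 0 (subdiff h x) \<ge> 1)))"

lemma KL_exponent_iff:
  "KL_exponent h \<alpha> \<longleftrightarrow> proper_fun h \<and> closed_fun h \<and> (\<forall>xh \<in> dom_subdiff h. KL_at h \<alpha> xh)"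
  unfolding KL_exponent_def KL_at_def ..

lemma KL_inequality_of_norm_bound:
  fixes S :: "'a::real_normed_vector set"
  assumes "S \<noteq> {}" "\<And>v. v \<in> S \<Longrightarrow> \<eta> \<le> norm v"
    and "0 < e" "0 < a0" "\<alpha> < 1" "e powr \<alpha> \<le> a0 * (1 - \<alpha>) * \<eta>"
  shows "1 \<le> a0 * (1 - \<alpha>) * e powr (- \<alpha>) * infdist 0 S"
proof -
  have "\<eta> \<le> infdist 0 S"
    unfolding infdist_notempty[OF assms(1)]
    by (rule cINF_greatest[OF assms(1)]) (simp add: assms(2) dist_norm)
  have "1 = e powr (- \<alpha>) * e powr \<alpha>" using \<open>0 < e\<close> by (simp flip: powr_add)
  also have "\<dots> \<le> e powr (- \<alpha>) * (a0 * (1 - \<alpha>) * \<eta>)"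
    using assms(6) by (intro mult_left_mono) auto
  also have "\<dots> \<le> e powr (- \<alpha>) * (a0 * (1 - \<alpha>) * infdist 0 S)"
    using \<open>\<eta> \<le> infdist 0 S\<close> assms(4,5) by (intro mult_left_mono) auto
  finally show ?thesis by (simp add: ac_simps)
qed

lemma KL_at_slope_bound:
  fixes G :: "'a::real_inner \<Rightarrow> real"
  assumes "KL_at (\<lambda>x. ereal (G x)) \<alpha> xh" "\<alpha> < 1"
  shows "\<exists>\<delta>>0. \<exists>a>0. \<exists>c>0. \<forall>y w. dist y xh < \<delta> \<longrightarrow> G xh < G y \<longrightarrow> G y < G xh + a
           \<longrightarrow> (\<forall>u. G y + w \<bullet> (u - y) \<le> G u) \<longrightarrow> c * (G y - G xh) powr \<alpha> \<le> norm w"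
proof -
  obtain a V a0 where "0 < a" "open V" "xh \<in> V" "0 < a0"
    and KL: "\<And>x. x \<in> V \<Longrightarrow> G xh < G x \<Longrightarrow> ereal (G x) < ereal (G xh) + a
      \<Longrightarrow> subdiff (\<lambda>x. ereal (G x)) x \<noteq> {} \<Longrightarrow>
      1 \<le> a0 * (1 - \<alpha>) * (G x - G xh) powr - \<alpha> * infdist 0 (subdiff (\<lambda>x. ereal (G x)) x)"
    using assms(1) unfolding KL_at_def by auto
  obtain \<delta> where "0 < \<delta>" "ball xh \<delta> \<subseteq> V" using \<open>open V\<close> \<open>xh \<in> V\<close> open_contains_ball by blast
  define a' where "a' = (if a = \<infinity> then 1 else real_of_ereal a)"
  have "0 < a'" and a': "\<And>r. r < a' \<Longrightarrow> ereal r < a"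
    using \<open>0 < a\<close> by (cases a; auto simp: a'_def)+
  have "c * (G y - G xh) powr \<alpha> \<le> norm w"
    if "dist y xh < \<delta>" "G xh < G y" "G y < G xh + a'" and subgrad: "\<forall>u. G y + w \<bullet> (u - y) \<le> G u"
    and "c = 1 / (a0 * (1 - \<alpha>))" for y w c
  proof -
    have w: "w \<in> subdiff (\<lambda>x. ereal (G x)) y" using subgrad by (simp add: subdiff_def)
    have "ereal (G y) < ereal (G xh) + a"
      using a'[of "G y - G xh"] that(3) \<open>0 < a\<close> by (cases a) auto
    moreover have "y \<in> V" using that(1) \<open>ball xh \<delta> \<subseteq> V\<close> by (auto simp: dist_commute)
    ultimately have "1 \<le> a0 * (1 - \<alpha>) * (G y - G xh) powr - \<alpha> * infdist 0 (subdiff (\<lambda>x. ereal (G x)) y)"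
      using KL[of y] w that(2) by blast
    also have "\<dots> \<le> a0 * (1 - \<alpha>) * (G y - G xh) powr - \<alpha> * norm w"
      using infdist_le[OF w, of 0] \<open>0 < a0\<close> assms(2) by (intro mult_left_mono) auto
    finally have "(G y - G xh) powr \<alpha> * 1 \<le> (G y - G xh) powr \<alpha> * (a0 * (1 - \<alpha>) * (G y - G xh) powr - \<alpha> * norm w)"
      by (intro mult_left_mono) auto
    also have "\<dots> = a0 * (1 - \<alpha>) * norm w"
      using that(2) by (simp add: ac_simps flip: powr_add)
    finally have "(G y - G xh) powr \<alpha> \<le> a0 * (1 - \<alpha>) * norm w" by simp
    then show ?thesis
      using that(5) \<open>0 < a0\<close> assms(2) by (simp add: pos_divide_le_eq mult.commute)
  qed
  moreover have "0 < 1 / (a0 * (1 - \<alpha>))" using \<open>0 < a0\<close> assms(2) by simp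
  ultimately show ?thesis using \<open>0 < \<delta>\<close> \<open>0 < a'\<close> by blast
qed

lemma minimizer_in_dom_subdiff:
  fixes G :: "'a::real_inner \<Rightarrow> real"
  assumes "\<And>y. G x \<le> G y"
  shows "x \<in> dom_subdiff (\<lambda>x. ereal (G x))"
  using assms by (auto simp: dom_subdiff_def subdiff_def intro!: exI[of _ 0])

lemma subdiff_constrained:
  assumes "v \<in> subdiff (\<lambda>x. ereal (P x) + indicator_fun C x) x"
  shows "x \<in> C" "\<And>y. y \<in> C \<Longrightarrow> P x + v \<bullet> (y - x) \<le> P y"
  using assms by (auto simp: subdiff_def indicator_fun_def split: if_splits)

lemma proper_fun_constrained:
  "C \<noteq> {} \<Longrightarrow> proper_fun (\<lambda>x. ereal (P x) + indicator_fun C x)"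
  by (auto simp: proper_fun_def indicator_fun_def)

lemma closed_fun_constrained:
  assumes "continuous_on UNIV P" "closed C"
  shows "closed_fun (\<lambda>x. ereal (P x) + indicator_fun C x)"
proof -
  have "{p. ereal (P (fst p)) + indicator_fun C (fst p) \<le> ereal (snd p)}
      = (C \<times> UNIV) \<inter> {p. P (fst p) \<le> snd p}"
    by (auto simp: indicator_fun_def)
  moreover have "closed {p. P (fst p) \<le> snd p}"
    by (intro closed_Collect_le continuous_on_compose2[OF assms(1)] continuous_intros) auto
  ultimately show ?thesis
    unfolding closed_fun_def using assms(2) by (simp add: closed_Int closed_Times)
qed

lemma INF_constrained_minimum:
  assumes "xh \<in> C" "\<And>y. y \<in> C \<Longrightarrow> P xh \<le> P y"
  shows "(INF x. ereal (P x) + indicator_fun C x) = ereal (P xh)"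
proof (rule antisym)
  show "(INF x. ereal (P x) + indicator_fun C x) \<le> ereal (P xh)"
    using INF_lower[of xh UNIV "\<lambda>x. ereal (P x) + indicator_fun C x"] assms(1)
    by (simp add: indicator_fun_def)
  show "ereal (P xh) \<le> (INF x. ereal (P x) + indicator_fun C x)"
    using assms(2) by (intro INF_greatest) (simp add: indicator_fun_def)
qed

lemma KL_at_constrained_non_minimizer:
  fixes P :: "'a::real_inner \<Rightarrow> real"
  assumes "xh \<in> C" "y0 \<in> C" "P y0 < P xh" "0 \<le> \<alpha>" "\<alpha> < 1"
  shows "KL_at (\<lambda>x. ereal (P x) + indicator_fun C x) \<alpha> xh"
proof -
  define F where "F = (\<lambda>x. ereal (P x) + indicator_fun C x)"
  define \<eta> where "\<eta> = (P xh - P y0) / (dist xh y0 + 1)"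
  have "0 < \<eta>" using assms(3) by (simp add: \<eta>_def add_nonneg_pos)
  have "1 \<le> 1 / ((1 - \<alpha>) * \<eta>) * (1 - \<alpha>) * real_of_ereal (F x - F xh) powr - \<alpha> * infdist 0 (subdiff F x)"
    if "x \<in> ball xh 1" "F xh < F x" "F x < F xh + 1" "subdiff F x \<noteq> {}" for x
  proof -
    have "x \<in> C" using that(4) subdiff_constrained(1) unfolding F_def by blast
    define e where "e = P x - P xh"
    have "0 < e" "e < 1" "real_of_ereal (F x - F xh) = e"
      using that(2,3) \<open>x \<in> C\<close> assms(1) by (auto simp: F_def e_def indicator_fun_def one_ereal_def)
    have norm_bound: "\<eta> \<le> norm v" if "v \<in> subdiff F x" for v
    proof -
      have "P x + v \<bullet> (y0 - x) \<le> P y0"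
        using subdiff_constrained(2) that assms(2) by (fastforce simp: F_def)
      then have "P xh - P y0 \<le> v \<bullet> (x - y0)"
        using \<open>0 < e\<close> by (simp add: e_def inner_diff_right)
      also have "\<dots> \<le> norm v * dist x y0" by (simp add: dist_norm norm_cauchy_schwarz)
      also have "\<dots> \<le> norm v * (dist xh y0 + 1)"
        using \<open>x \<in> ball xh 1\<close> dist_triangle[of x y0 xh]
        by (intro mult_left_mono) (auto simp: dist_commute)
      finally show ?thesis by (simp add: \<eta>_def divide_le_eq add_nonneg_pos)
    qed
    have "e powr \<alpha> \<le> 1 / ((1 - \<alpha>) * \<eta>) * (1 - \<alpha>) * \<eta>"
      using \<open>0 < e\<close> \<open>e < 1\<close> \<open>0 < \<eta>\<close> assms(4,5) powr_mono2[of \<alpha> e 1] by simp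
    from KL_inequality_of_norm_bound[OF that(4) norm_bound \<open>0 < e\<close> _ assms(5) this]
    show ?thesis using \<open>0 < \<eta>\<close> assms(5) \<open>real_of_ereal (F x - F xh) = e\<close> by simp
  qed
  moreover have "0 < 1 / ((1 - \<alpha>) * \<eta>)" using \<open>0 < \<eta>\<close> assms(5) by simp
  ultimately show ?thesis
    unfolding KL_at_def F_def[symmetric]
    by (intro exI[of _ 1] conjI exI[of _ "ball xh 1"] exI[of _ "1 / ((1 - \<alpha>) * \<eta>)"]) auto
qed

lemma KL_at_constrained_of_error_bound:
  fixes P :: "'a::real_inner \<Rightarrow> real"
  assumes "xh \<in> C" "\<alpha> < 1" "0 < \<delta>" "0 < a" "0 < K"
    and error_bound: "\<And>x. dist x xh < \<delta> \<Longrightarrow> x \<in> C \<Longrightarrow> P xh < P x \<Longrightarrow> P x < P xh + a \<Longrightarrow>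
        \<exists>s\<in>C. P s = P xh \<and> dist x s \<le> K * (P x - P xh) powr (1 - \<alpha>)"
  shows "KL_at (\<lambda>x. ereal (P x) + indicator_fun C x) \<alpha> xh"
proof -
  define F where "F = (\<lambda>x. ereal (P x) + indicator_fun C x)"
  have "1 \<le> K / (1 - \<alpha>) * (1 - \<alpha>) * real_of_ereal (F x - F xh) powr - \<alpha> * infdist 0 (subdiff F x)"
    if "x \<in> ball xh \<delta>" "F xh < F x" "F x < F xh + ereal a" "subdiff F x \<noteq> {}" for x
  proof -
    have "x \<in> C" using that(4) subdiff_constrained(1) unfolding F_def by blast
    define e where "e = P x - P xh"
    have "0 < e" "e < a" "real_of_ereal (F x - F xh) = e"
      using that(2,3) \<open>x \<in> C\<close> assms(1) by (auto simp: F_def e_def indicator_fun_def)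
    have "dist x xh < \<delta>" using that(1) by (simp add: dist_commute)
    then have "\<exists>s\<in>C. P s = P xh \<and> dist x s \<le> K * e powr (1 - \<alpha>)"
      using error_bound \<open>x \<in> C\<close> \<open>0 < e\<close> \<open>e < a\<close> unfolding e_def by force
    then obtain s where "s \<in> C" "P s = P xh" and s_near: "dist x s \<le> K * e powr (1 - \<alpha>)"
      by blast
    have norm_bound: "e powr \<alpha> / K \<le> norm v" if "v \<in> subdiff F x" for v
    proof -
      have "P x + v \<bullet> (s - x) \<le> P s"
        using subdiff_constrained(2) that \<open>s \<in> C\<close> by (fastforce simp: F_def)
      then have "e \<le> v \<bullet> (x - s)" using \<open>P s = P xh\<close> by (simp add: e_def inner_diff_right)
      also have "\<dots> \<le> norm v * dist x s" by (simp add: dist_norm norm_cauchy_schwarz)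
      also have "\<dots> \<le> norm v * (K * (e / e powr \<alpha>))"
        using s_near \<open>0 < e\<close> by (intro mult_left_mono) (auto simp: powr_diff)
      finally have "e * e powr \<alpha> \<le> norm v * K * e"
        using \<open>0 < e\<close> by (simp add: field_simps)
      then show ?thesis using \<open>0 < e\<close> \<open>0 < K\<close> by (simp add: divide_le_eq mult.commute)
    qed
    have "e powr \<alpha> \<le> K / (1 - \<alpha>) * (1 - \<alpha>) * (e powr \<alpha> / K)"
      using \<open>0 < K\<close> assms(2) by simp
    from KL_inequality_of_norm_bound[OF that(4) norm_bound \<open>0 < e\<close> _ assms(2) this]
    show ?thesis using \<open>0 < K\<close> assms(2) \<open>real_of_ereal (F x - F xh) = e\<close> by simp
  qed
  moreover have "0 < K / (1 - \<alpha>)" using \<open>0 < K\<close> assms(2) by simp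
  ultimately show ?thesis
    unfolding KL_at_def F_def[symmetric] using assms(3,4)
    by (intro exI[of _ "ereal a"] conjI exI[of _ "ball xh \<delta>"] exI[of _ "K / (1 - \<alpha>)"]) auto
qed

lemma strictly_convex_imp_convex_on:
  assumes "strictly_convex f"
  shows "convex_on UNIV f"
proof (rule convex_onI)
  fix t :: real and x y assume "0 < t" "t < 1"
  then show "f ((1 - t) *\<^sub>R x + t *\<^sub>R y) \<le> (1 - t) * f x + t * f y"
    using assms unfolding strictly_convex_def
    by (cases "x = y") (auto simp: algebra_simps less_imp_le simp flip: scaleR_add_left)
qed simp

lemma continuous_on_strictly_convex_linear:
  fixes f :: "'a::euclidean_space \<Rightarrow> 'b::euclidean_space"
  assumes "strictly_convex l" "linear f"
  shows "continuous_on UNIV (\<lambda>x. l (f x))"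
  using convex_on_continuous[OF open_UNIV strictly_convex_imp_convex_on[OF assms(1)]]
    linear_continuous_on[of f UNIV] assms(2)
  by (auto simp: linear_conv_bounded_linear intro: continuous_on_compose2)

lemma convex_on_linear_comp:
  assumes "convex_on UNIV l" "linear f"
  shows "convex_on UNIV (\<lambda>x. l (f x))"
proof (rule convex_onI)
  fix t :: real and x y assume "0 < t" "t < 1"
  then show "l (f ((1 - t) *\<^sub>R x + t *\<^sub>R y)) \<le> (1 - t) * l (f x) + t * l (f y)"
    using convex_onD[OF assms(1), of t "f x" "f y"] linear_add[OF assms(2)] linear_scale[OF assms(2)]
    by simp
qed simp

lemma strictly_convex_Lagrangian_minimizers:
  assumes "convex_on UNIV P" "linear f" "strictly_convex l" "0 < lam"
    and lower: "\<And>x. m \<le> P x + lam * l (f x)"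
    and "P s + lam * l (f s) = m" "P t + lam * l (f t) = m"
  shows "f s = f t"
proof (rule ccontr)
  assume "f s \<noteq> f t"
  define u where "u = (1/2::real) *\<^sub>R s + (1/2::real) *\<^sub>R t"
  have "f u = (1/2::real) *\<^sub>R f s + (1/2::real) *\<^sub>R f t"
    by (simp add: u_def linear_add[OF assms(2)] linear_scale[OF assms(2)])
  then have "l (f u) < (1/2) * l (f s) + (1/2) * l (f t)"
    using assms(3)[unfolded strictly_convex_def, rule_format, of "f s" "f t" "1/2"] \<open>f s \<noteq> f t\<close>
    by simp
  moreover have "P u \<le> (1/2) * P s + (1/2) * P t"
    using convex_onD[OF assms(1), of "1/2" s t] by (simp add: u_def)
  moreover have "lam * l (f u) < lam * ((1/2) * l (f s) + (1/2) * l (f t))"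
    using calculation(1) assms(4) by (rule mult_strict_left_mono)
  ultimately have "P u + lam * l (f u) < (1/2) * (P s + lam * l (f s)) + (1/2) * (P t + lam * l (f t))"
    by (simp add: algebra_simps)
  then have "P u + lam * l (f u) < m" using assms(6,7) by simp
  then show False using lower[of u] by simp
qed

lemma convex_KL_at_error_bound:
  fixes G :: "'a::euclidean_space \<Rightarrow> real"
  assumes cont: "continuous_on UNIV G" and conv: "convex_on UNIV G" and min: "\<And>x. G xh \<le> G x"
    and "0 < \<alpha>" "\<alpha> < 1" and KL: "KL_at (\<lambda>x. ereal (G x)) \<alpha> xh"
  shows "\<exists>\<delta>>0. \<exists>a>0. \<exists>K>0. \<forall>x. dist x xh < \<delta> \<longrightarrow> G x < G xh + a
           \<longrightarrow> (\<exists>s. G s = G xh \<and> dist x s \<le> K * (G x - G xh) powr (1 - \<alpha>))"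
proof -
  define g where "g x = G x - G xh" for x
  have g_nonneg: "0 \<le> g x" for x using min[of x] by (simp add: g_def)
  have g_cont: "continuous_on UNIV g" unfolding g_def by (intro continuous_intros cont)
  have g_convex: "convex_on UNIV g"
    unfolding g_def using conv by (intro convex_on_diff) (simp_all add: concave_on_const)
  obtain \<delta> a c where "0 < \<delta>" "0 < a" "0 < c"
    and slope: "\<And>y w. dist y xh < \<delta> \<Longrightarrow> G xh < G y \<Longrightarrow> G y < G xh + a
      \<Longrightarrow> (\<forall>u. G y + w \<bullet> (u - y) \<le> G u) \<Longrightarrow> c * (G y - G xh) powr \<alpha> \<le> norm w"
    using KL_at_slope_bound[OF KL \<open>\<alpha> < 1\<close>] by blast
  have g_slope: "c * g y powr \<alpha> \<le> norm w"
    if "dist y xh < \<delta>" "0 < g y" "g y < a" "\<forall>u. g y + w \<bullet> (u - y) \<le> g u" for y w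
    using slope[of y w] that by (simp add: g_def)
  define K where "K = 5 / (c * (1 - \<alpha>))"
  have "0 < K" using \<open>0 < c\<close> assms(5) by (simp add: K_def)
  have "\<forall>x. dist x xh < \<delta> / 3 \<longrightarrow> G x < G xh + a
          \<longrightarrow> (\<exists>s. G s = G xh \<and> dist x s \<le> K * (G x - G xh) powr (1 - \<alpha>))"
    using convex_KL_error_bound[OF g_cont g_convex g_nonneg _ \<open>0 < c\<close> assms(4,5) g_slope]
    by (simp add: g_def K_def)
  moreover have "0 < \<delta> / 3" using \<open>0 < \<delta>\<close> by simp
  ultimately show ?thesis using \<open>0 < a\<close> \<open>0 < K\<close> by blast
qed

lemma KL_at_constrained_minimizer:
  fixes P :: "'a::euclidean_space \<Rightarrow> real" and f :: "'a \<Rightarrow> 'b::euclidean_space" and l :: "'b \<Rightarrow> real"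
  assumes P_convex: "convex_on UNIV P" and P_cont: "continuous_on UNIV P"
    and "linear f" and l_strict: "strictly_convex l"
    and "0 < lam" "0 < \<alpha>" "\<alpha> < 1" "l (f xh) \<le> 0"
    and lower: "\<And>x. P xh \<le> P x + lam * l (f x)"
    and KL: "KL_at (\<lambda>x. ereal (P x + lam * l (f x))) \<alpha> xh"
  shows "KL_at (\<lambda>x. ereal (P x) + indicator_fun {x. l (f x) \<le> 0} x) \<alpha> xh"
proof -
  define G where "G = (\<lambda>x. P x + lam * l (f x))"
  have "lam * l (f xh) = 0"
    using lower[of xh] mult_nonneg_nonpos[of lam "l (f xh)"] assms(5,8) by simp
  then have "G xh = P xh" by (simp add: G_def)
  have "continuous_on UNIV G"
    unfolding G_def
    by (intro continuous_intros P_cont continuous_on_strictly_convex_linear[OF l_strict \<open>linear f\<close>])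
  moreover have "convex_on UNIV G"
    unfolding G_def using \<open>0 < lam\<close>
    by (intro convex_on_add P_convex convex_on_cmul
        convex_on_linear_comp[OF strictly_convex_imp_convex_on[OF l_strict] \<open>linear f\<close>]) auto
  ultimately obtain \<delta> a K where "0 < \<delta>" "0 < a" "0 < K"
    and G_error_bound: "\<And>x. dist x xh < \<delta> \<Longrightarrow> G x < G xh + a
      \<Longrightarrow> \<exists>s. G s = G xh \<and> dist x s \<le> K * (G x - G xh) powr (1 - \<alpha>)"
    using convex_KL_at_error_bound[of G xh \<alpha>] lower KL assms(6,7) \<open>G xh = P xh\<close>
    unfolding G_def by auto
  have "\<exists>s\<in>{x. l (f x) \<le> 0}. P s = P xh \<and> dist x s \<le> K * (P x - P xh) powr (1 - \<alpha>)"
    if x: "dist x xh < \<delta>" "l (f x) \<le> 0" "P x < P xh + a" for x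
  proof -
    have "G x \<le> P x"
      using x(2) mult_nonneg_nonpos[of lam "l (f x)"] \<open>0 < lam\<close> by (simp add: G_def)
    then obtain s where "G s = P xh" and s_near: "dist x s \<le> K * (G x - P xh) powr (1 - \<alpha>)"
      using G_error_bound[OF x(1)] x(3) \<open>G xh = P xh\<close> by auto
    have "f s = f xh"
      using strictly_convex_Lagrangian_minimizers[OF P_convex \<open>linear f\<close> l_strict \<open>0 < lam\<close> lower]
        \<open>G s = P xh\<close> \<open>G xh = P xh\<close> by (simp add: G_def)
    then have "l (f s) \<le> 0" "P s = P xh"
      using \<open>G s = P xh\<close> \<open>lam * l (f xh) = 0\<close> \<open>0 < lam\<close> by (simp_all add: G_def)
    moreover have "(G x - P xh) powr (1 - \<alpha>) \<le> (P x - P xh) powr (1 - \<alpha>)"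
      using \<open>G x \<le> P x\<close> lower[of x] \<open>\<alpha> < 1\<close> by (intro powr_mono2) (auto simp: G_def)
    then have "K * (G x - P xh) powr (1 - \<alpha>) \<le> K * (P x - P xh) powr (1 - \<alpha>)"
      using \<open>0 < K\<close> by (intro mult_left_mono) auto
    ultimately show ?thesis using s_near by auto
  qed
  then show ?thesis
    using \<open>l (f xh) \<le> 0\<close> \<open>\<alpha> < 1\<close> \<open>0 < \<delta>\<close> \<open>0 < a\<close> \<open>0 < K\<close>
    by (intro KL_at_constrained_of_error_bound[of xh "{x. l (f x) \<le> 0}" \<alpha> \<delta> a K]) auto
qed

lemma KL_at_constrained:
  fixes P :: "'a::euclidean_space \<Rightarrow> real" and f :: "'a \<Rightarrow> 'b::euclidean_space" and l :: "'b \<Rightarrow> real"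
  defines "F \<equiv> \<lambda>x. ereal (P x) + indicator_fun {x. l (f x) \<le> 0} x"
  assumes P_convex: "convex_on UNIV P" and P_cont: "continuous_on UNIV P"
    and "linear f" and l_strict: "strictly_convex l" and "0 \<le> lam" and \<alpha>: "0 < \<alpha>" "\<alpha> < 1"
    and inf_lt: "(INF x. ereal (P x)) < (INF x. F x)"
    and INF_eq: "(INF x. ereal (P x + lam * l (f x))) = (INF x. F x)"
    and KL: "KL_exponent (\<lambda>x. ereal (P x + lam * l (f x))) \<alpha>"
    and "xh \<in> dom_subdiff F"
  shows "KL_at F \<alpha> xh"
proof -
  define C where "C = {x. l (f x) \<le> 0}"
  obtain v where "v \<in> subdiff F xh" using \<open>xh \<in> dom_subdiff F\<close> unfolding dom_subdiff_def by blast
  then have "xh \<in> C" unfolding F_def C_def by (rule subdiff_constrained(1))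
  show ?thesis
  proof (cases "\<exists>y\<in>C. P y < P xh")
    case True
    then obtain y0 where "y0 \<in> C" "P y0 < P xh" by blast
    then show ?thesis
      unfolding F_def C_def[symmetric] using \<open>xh \<in> C\<close> \<alpha> by (intro KL_at_constrained_non_minimizer) auto
  next
    case False
    then have "(INF x. F x) = ereal (P xh)"
      unfolding F_def C_def[symmetric] by (intro INF_constrained_minimum[OF \<open>xh \<in> C\<close>]) (simp add: not_less)
    then have lower: "P xh \<le> P x + lam * l (f x)" for x
      using INF_lower[of x UNIV "\<lambda>x. ereal (P x + lam * l (f x))"] INF_eq by simp
    have "lam \<noteq> 0" using INF_eq inf_lt by auto
    have "l (f xh) \<le> 0" using \<open>xh \<in> C\<close> by (simp add: C_def)
    then have "P xh + lam * l (f xh) \<le> P y + lam * l (f y)" for y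
      using lower[of y] mult_nonneg_nonpos[OF \<open>0 \<le> lam\<close>, of "l (f xh)"] by linarith
    then have "KL_at (\<lambda>x. ereal (P x + lam * l (f x))) \<alpha> xh"
      using KL by (simp add: KL_exponent_iff minimizer_in_dom_subdiff)
    then show ?thesis
      unfolding F_def using \<open>0 \<le> lam\<close> \<open>lam \<noteq> 0\<close> \<open>l (f xh) \<le> 0\<close> \<alpha>
      by (intro KL_at_constrained_minimizer[OF P_convex P_cont \<open>linear f\<close> l_strict _ _ _ _ lower]) auto
  qed
qed

theorem mainTheorem14:
  fixes P1 :: "real^'n \<Rightarrow> real" and A1 :: "real^'n^'q" and l1 :: "real^'q \<Rightarrow> real"
    and F :: "real^'n \<Rightarrow> ereal" and \<alpha> :: real
  assumes P1_convex: "convex_on UNIV P1" and P1_cont: "continuous_on UNIV P1"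
    and l1_strict: "strictly_convex l1"
    and feasible: "{x. l1 (A1 *v x) \<le> 0} \<noteq> {}"
    and F_def: "F = (\<lambda>x. ereal (P1 x) + indicator_fun {x. l1 (A1 *v x) \<le> 0} x)"
    and inf_lt: "(INF x. ereal (P1 x)) < (INF x. F x)"
    and mult: "\<exists>lam::real. lam \<ge> 0 \<and> (INF x. ereal (P1 x + lam * l1 (A1 *v x))) = (INF x. F x)
                 \<and> (INF x. F x) > -\<infinity>
                 \<and> KL_exponent (\<lambda>x. ereal (P1 x + lam * l1 (A1 *v x))) \<alpha>"
    and alpha: "0 < \<alpha>" "\<alpha> < 1"
  shows "KL_exponent F \<alpha>"
proof -
  obtain lam where "0 \<le> lam" "(INF x. ereal (P1 x + lam * l1 (A1 *v x))) = (INF x. F x)"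
    and "KL_exponent (\<lambda>x. ereal (P1 x + lam * l1 (A1 *v x))) \<alpha>"
    using mult by blast
  then have "KL_at F \<alpha> xh" if "xh \<in> dom_subdiff F" for xh
    using KL_at_constrained[OF P1_convex P1_cont matrix_vector_mul_linear l1_strict _ alpha] that inf_lt
    unfolding F_def by blast
  moreover have "closed {x. l1 (A1 *v x) \<le> 0}"
    using continuous_on_strictly_convex_linear[OF l1_strict matrix_vector_mul_linear]
    by (intro closed_Collect_le continuous_intros) auto
  ultimately show ?thesis
    using proper_fun_constrained[OF feasible] closed_fun_constrained[OF P1_cont]
    by (simp add: KL_exponent_iff F_def)
qed

end
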